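(* Let $G_n$, $m$ and $T$ be as in the context. A minimal walk in $G_n$ (starting at $m$) is an Eulerian cycle of $G_n$ if and only if $T$ is a tree, i.e. $T$ contains no directed cycle (equivalently, $T$ is a spanning tree of $G_n$ in which every vertex has a directed path to $m$).
   Context: Let $A$ be a finite alphabet with a linear order $<$, extended to the lexicographic order on words: $x<y$ if $x$ is a proper prefix of $y$, or $x=uav$, $y=ubw$ with $a,b\in A$, $a<b$. Let $\mathcal{F}$ be a set of words over $A$ (forbidden words). A word $w$ is in the language if the bi-infinite periodic sequence $\cdots www\cdots$ contains no element of $\mathcal{F}$ as a factor; $W_k$ denotes the set of words of length $k$ in the language. Fix $n\geq 1$ and consider the digraph with vertex set $A^n$ and arcs $(as,sb)$ for $a,b\in A$, $s\in A^{n-1}$, $asb\in W_{n+1}$, the label of $(as,sb)$ being $b$. The de Bruijn graph of span $n$, $G_n$, is a strongly connected component of maximum size of this digraph; vertices are identified with their words. Let $m$ be the vertex of $G_n$ whose word is lexicographically largest. For each vertex $v$, let $e(v)$ be the arc of $G_n$ with tail $v$ having maximum label. $T$ is the spanning subgraph of $G_n$ with arc set $\{e(v): v\in V(G_n), v\neq m\}$. A minimal walk is the walk constructed as follows: start at $m$; at the current vertex, follow the arc of smallest label among the not-yet-used arcs with tail at this vertex; stop when no unused arc leaves the current vertex. An Eulerian cycle is a closed walk using every arc of $G_n$ exactly once. *)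

theory Defs
  imports Main
begin

text \<open>An arc (as, sb) of the de Bruijn graph is identified with the word asb of length n+1:
  its tail is butlast, its head is tl, its label is last.\<close>

text \<open>u is a factor of the bi-infinite periodic sequence ... w w w ...\<close>
definition periodic_factor :: "'a list \<Rightarrow> 'a list \<Rightarrow> bool" where
  "periodic_factor u w \<longleftrightarrow>
     (\<exists>i. \<forall>j < length u. u ! j = w ! ((i + j) mod length w))"

definition in_lang :: "'a list set \<Rightarrow> 'a list \<Rightarrow> bool" where
  "in_lang F w \<longleftrightarrow> w \<noteq> [] \<and> \<not> (\<exists>u\<in>F. periodic_factor u w)"

definition W :: "'a list set \<Rightarrow> nat \<Rightarrow> 'a list set" where
  "W F k = {w. length w = k \<and> in_lang F w}"

definition dB_rel :: "'a list set \<Rightarrow> nat \<Rightarrow> ('a list \<times> 'a list) set" where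
  "dB_rel F n = {(butlast x, tl x) | x. x \<in> W F (Suc n)}"

definition is_scc :: "'a list set \<Rightarrow> nat \<Rightarrow> 'a list set \<Rightarrow> bool" where
  "is_scc F n C \<longleftrightarrow> C \<noteq> {} \<and> C \<subseteq> {v. length v = n} \<and>
     (\<forall>u\<in>C. \<forall>v. length v = n \<longrightarrow>
        (v \<in> C \<longleftrightarrow> (u, v) \<in> (dB_rel F n)\<^sup>* \<and> (v, u) \<in> (dB_rel F n)\<^sup>*))"

definition is_max_scc :: "'a list set \<Rightarrow> nat \<Rightarrow> 'a list set \<Rightarrow> bool" where
  "is_max_scc F n C \<longleftrightarrow> is_scc F n C \<and> (\<forall>C'. is_scc F n C' \<longrightarrow> card C' \<le> card C)"

definition G_arcs :: "'a list set \<Rightarrow> nat \<Rightarrow> 'a list set \<Rightarrow> 'a list set" where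
  "G_arcs F n C = {x \<in> W F (Suc n). butlast x \<in> C \<and> tl x \<in> C}"

definition lex_less :: "'a::linorder list \<Rightarrow> 'a list \<Rightarrow> bool" where
  "lex_less v w \<longleftrightarrow> (v, w) \<in> lexord {(a, b). a < b}"

definition is_lex_max :: "'a::linorder list set \<Rightarrow> 'a list \<Rightarrow> bool" where
  "is_lex_max C m \<longleftrightarrow> m \<in> C \<and> (\<forall>v\<in>C. v \<noteq> m \<longrightarrow> lex_less v m)"

definition T_arcs :: "'a::linorder list set \<Rightarrow> nat \<Rightarrow> 'a list set \<Rightarrow> 'a list \<Rightarrow> 'a list set" where
  "T_arcs F n C m = {x \<in> G_arcs F n C. butlast x \<noteq> m \<and>
      (\<forall>y \<in> G_arcs F n C. butlast y = butlast x \<longrightarrow> last y \<le> last x)}"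

definition T_rel :: "'a::linorder list set \<Rightarrow> nat \<Rightarrow> 'a list set \<Rightarrow> 'a list \<Rightarrow> ('a list \<times> 'a list) set" where
  "T_rel F n C m = {(butlast x, tl x) | x. x \<in> T_arcs F n C m}"

definition cur :: "'a list \<Rightarrow> 'a list list \<Rightarrow> 'a list" where
  "cur s ws = (if ws = [] then s else tl (last ws))"

inductive min_walk_prefix :: "'a::linorder list set \<Rightarrow> 'a list \<Rightarrow> 'a list list \<Rightarrow> bool"
  for Arcs s where
  Nil: "min_walk_prefix Arcs s []"
| step: "min_walk_prefix Arcs s ws \<Longrightarrow> x \<in> Arcs - set ws \<Longrightarrow> butlast x = cur s ws \<Longrightarrow>
     (\<forall>y \<in> Arcs - set ws. butlast y = butlast x \<longrightarrow> last x \<le> last y) \<Longrightarrow>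
     min_walk_prefix Arcs s (ws @ [x])"

definition minimal_walk :: "'a::linorder list set \<Rightarrow> 'a list \<Rightarrow> 'a list list \<Rightarrow> bool" where
  "minimal_walk Arcs s ws \<longleftrightarrow> min_walk_prefix Arcs s ws \<and>
     \<not> (\<exists>y \<in> Arcs - set ws. butlast y = cur s ws)"

definition eulerian_cycle :: "'a list set \<Rightarrow> 'a list list \<Rightarrow> bool" where
  "eulerian_cycle Arcs ws \<longleftrightarrow> distinct ws \<and> set ws = Arcs \<and>
     (\<forall>i. Suc i < length ws \<longrightarrow> tl (ws ! i) = butlast (ws ! Suc i)) \<and>
     (ws \<noteq> [] \<longrightarrow> tl (last ws) = butlast (hd ws))"

end

theory Submission
  imports Defs
begin

text \<open>Arcs are words of length n+1, and rotating a word turns an arc entering a vertex v into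
  an arc leaving v; since the language and the component are closed under rotation, every vertex
  of G_n has equal in- and out-degree. Hence a minimal walk can only get stuck at its start m,
  and the walk is an Eulerian cycle iff it uses every arc.

  If it does, the arc e(v) of maximal label is the last arc by which the walk leaves v \<noteq> m, so
  the time of the last departure strictly increases along T, and T is acyclic. If some arc is
  unused, let v be the tail of one: e(v) is unused too, since the minimal walk takes e(v) only
  after every other arc leaving v, and by balance its head again has an unused outgoing arc.
  So T maps tails of unused arcs to tails of unused arcs, which in a finite graph forces a cycle.\<close>

lemma periodic_factor_of_rotate:
  assumes "periodic_factor u (rotate k w)"
  shows "periodic_factor u w"
proof (cases "w = []")
  case True
  with assms show ?thesis by simp
next
  case False
  from assms obtain i where i: "\<forall>j<length u. u ! j = rotate k w ! ((i + j) mod length w)"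
    by (auto simp: periodic_factor_def)
  have "u ! j = w ! ((k + i + j) mod length w)" if "j < length u" for j
  proof -
    have "u ! j = w ! ((k + (i + j) mod length w) mod length w)"
      using i that False by (simp add: nth_rotate)
    then show ?thesis by (simp add: mod_add_right_eq add.assoc)
  qed
  then show ?thesis unfolding periodic_factor_def by blast
qed

lemma periodic_factor_rotate: "periodic_factor u (rotate k w) \<longleftrightarrow> periodic_factor u w"
proof
  assume "periodic_factor u w"
  moreover have "rotate ((length w - 1) * k) (rotate k w) = w"
  proof (cases "w = []")
    case False
    then have "(length w - 1) * k + k = length w * k" by (cases "length w") simp_all
    then show ?thesis by (simp add: rotate_rotate)
  qed simp
  ultimately show "periodic_factor u (rotate k w)"
    by (metis periodic_factor_of_rotate)
qed (rule periodic_factor_of_rotate)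

lemma W_rotate: "rotate k x \<in> W F l \<longleftrightarrow> x \<in> W F l"
  by (simp add: W_def in_lang_def periodic_factor_rotate)

lemma W_rotate1: "rotate1 x \<in> W F l \<longleftrightarrow> x \<in> W F l"
  using W_rotate[of 1] by simp

lemma butlast_rotate1: "butlast (rotate1 xs) = tl xs"
  by (cases xs) simp_all

lemma dB_rel_tl_rotate:
  assumes "x \<in> W F (Suc n)"
  shows "(tl x, tl (rotate k x)) \<in> (dB_rel F n)\<^sup>*"
proof (induction k)
  case (Suc k)
  have "rotate1 (rotate k x) \<in> W F (Suc n)" using assms by (simp add: W_rotate1 W_rotate)
  then have "(tl (rotate k x), tl (rotate (Suc k) x)) \<in> dB_rel F n"
    unfolding dB_rel_def by (force simp: butlast_rotate1)
  with Suc.IH show ?case by (rule rtrancl_into_rtrancl)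
qed simp

lemma dB_rel_head_to_tail:
  assumes "x \<in> W F (Suc n)"
  shows "(tl x, butlast x) \<in> (dB_rel F n)\<^sup>*"
proof -
  have "length x = Suc n" using assms by (simp add: W_def)
  then have "rotate1 (rotate n x) = x" by (metis rotate_Suc rotate_id mod_self)
  then have "tl (rotate n x) = butlast x" by (metis butlast_rotate1)
  with dB_rel_tl_rotate[OF assms, of n] show ?thesis by simp
qed

lemma scc_tail_iff_head:
  assumes "is_scc F n C" and "x \<in> W F (Suc n)"
  shows "butlast x \<in> C \<longleftrightarrow> tl x \<in> C"
proof -
  have "(butlast x, tl x) \<in> (dB_rel F n)\<^sup>*" "(tl x, butlast x) \<in> (dB_rel F n)\<^sup>*"
    using assms(2) dB_rel_head_to_tail unfolding dB_rel_def by blast+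
  moreover have "length (butlast x) = n" "length (tl x) = n"
    using assms(2) by (simp_all add: W_def)
  ultimately show ?thesis using assms(1) unfolding is_scc_def by blast
qed

lemma G_arcs_rotate1:
  assumes "is_scc F n C"
  shows "rotate1 x \<in> G_arcs F n C \<longleftrightarrow> x \<in> G_arcs F n C"
  using scc_tail_iff_head[OF assms, of x] scc_tail_iff_head[OF assms, of "rotate1 x"]
  by (auto simp: G_arcs_def W_rotate1 butlast_rotate1)

lemma finite_G_arcs: "finite (G_arcs F n (C :: 'a::finite list set))"
proof (rule finite_subset)
  show "G_arcs F n C \<subseteq> {xs. set xs \<subseteq> UNIV \<and> length xs = Suc n}"
    by (auto simp: G_arcs_def W_def)
  show "finite {xs. set xs \<subseteq> (UNIV :: 'a set) \<and> length xs = Suc n}"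
    by (rule finite_lists_length_eq) simp
qed

lemma Nil_notin_G_arcs: "[] \<notin> G_arcs F n C"
  by (simp add: G_arcs_def W_def)

definition balanced :: "'a list set \<Rightarrow> bool" where
  "balanced A \<longleftrightarrow> (\<forall>v. card {x\<in>A. tl x = v} = card {x\<in>A. butlast x = v})"

lemma balanced_if_rotate1_closed:
  assumes "\<And>x. rotate1 x \<in> A \<longleftrightarrow> x \<in> A"
  shows "balanced A"
  unfolding balanced_def
proof
  fix v
  have img: "rotate1 ` {x\<in>A. tl x = v} = {x\<in>A. butlast x = v}"
  proof (intro equalityI subsetI)
    fix y assume y: "y \<in> {x\<in>A. butlast x = v}"
    obtain x where "y = rotate1 x" using surj_rotate1 by (metis surjD)
    with y assms show "y \<in> rotate1 ` {x\<in>A. tl x = v}" by (auto simp: butlast_rotate1)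
  qed (auto simp: assms butlast_rotate1)
  have "inj_on rotate1 {x\<in>A. tl x = v}" using inj_rotate1 by (rule inj_on_subset) simp
  from card_image[OF this] img show "card {x\<in>A. tl x = v} = card {x\<in>A. butlast x = v}" by simp
qed

lemma balanced_G_arcs: "is_scc F n C \<Longrightarrow> balanced (G_arcs F n C)"
  by (intro balanced_if_rotate1_closed G_arcs_rotate1)

definition is_max_label_arc :: "'a::linorder list set \<Rightarrow> 'a list \<Rightarrow> bool" where
  "is_max_label_arc A x \<longleftrightarrow> x \<in> A \<and> (\<forall>y\<in>A. butlast y = butlast x \<longrightarrow> last y \<le> last x)"

definition max_label_rel :: "'a::linorder list set \<Rightarrow> 'a list \<Rightarrow> ('a list \<times> 'a list) set" where
  "max_label_rel A s = {(butlast x, tl x) | x. is_max_label_arc A x \<and> butlast x \<noteq> s}"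

lemma max_label_arc_unique:
  assumes "[] \<notin> A" "is_max_label_arc A x" "y \<in> A" "butlast y = butlast x" "last x \<le> last y"
  shows "y = x"
proof -
  have "x \<in> A" "last y \<le> last x" using assms(2-4) by (auto simp: is_max_label_arc_def)
  then have "x \<noteq> []" "y \<noteq> []" "last y = last x" using assms by auto
  then show ?thesis using assms(4) by (metis append_butlast_last_id)
qed

lemma exists_max_label_arc:
  assumes "finite A" "y \<in> A"
  obtains x where "is_max_label_arc A x" "butlast x = butlast y"
proof -
  let ?E = "{x\<in>A. butlast x = butlast y}"
  have fin: "finite (last ` ?E)" using assms(1) by simp
  have ne: "last ` ?E \<noteq> {}" using assms(2) by blast
  from Max_in[OF fin ne] obtain x where x: "x \<in> ?E" "Max (last ` ?E) = last x"
    by (rule imageE)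
  have le: "last z \<le> last x" if "z \<in> ?E" for z
    unfolding x(2)[symmetric] using fin that by (intro Max_ge) auto
  have "is_max_label_arc A x" unfolding is_max_label_arc_def
  proof (intro conjI ballI impI)
    show "x \<in> A" using x(1) by simp
    fix z assume "z \<in> A" "butlast z = butlast x"
    then show "last z \<le> last x" using le x(1) by simp
  qed
  with x(1) show ?thesis using that by blast
qed

lemma T_rel_eq_max_label_rel: "T_rel F n C m = max_label_rel (G_arcs F n C) m"
  by (auto simp: T_rel_def T_arcs_def max_label_rel_def is_max_label_arc_def)

lemma acyclic_finite_has_sink:
  assumes "acyclic R" "finite U" "U \<noteq> {}"
  obtains u where "u \<in> U" "\<And>w. w \<in> U \<Longrightarrow> (u, w) \<notin> R"
proof -
  have "wf ((R \<inter> U \<times> U)\<inverse>)"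
    using assms(1,2) by (intro finite_acyclic_wf_converse acyclic_subset[OF assms(1)]) auto
  from this assms(3) obtain u where "u \<in> U" "\<And>w. (w, u) \<in> (R \<inter> U \<times> U)\<inverse> \<Longrightarrow> w \<notin> U"
    by (rule wfE_min') blast
  with that show ?thesis by blast
qed

lemma min_walk_prefix_distinct: "min_walk_prefix A s ws \<Longrightarrow> distinct ws"
  by (induction rule: min_walk_prefix.induct) auto

lemma min_walk_prefix_subset: "min_walk_prefix A s ws \<Longrightarrow> set ws \<subseteq> A"
  by (induction rule: min_walk_prefix.induct) auto

lemma min_walk_prefix_hd: "min_walk_prefix A s ws \<Longrightarrow> ws \<noteq> [] \<Longrightarrow> butlast (hd ws) = s"
  by (induction rule: min_walk_prefix.induct) (auto simp: hd_append cur_def)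

lemma min_walk_prefix_chain:
  "min_walk_prefix A s ws \<Longrightarrow> Suc i < length ws \<Longrightarrow> tl (ws ! i) = butlast (ws ! Suc i)"
proof (induction rule: min_walk_prefix.induct)
  case (step ws x)
  show ?case
  proof (cases "Suc i < length ws")
    case False
    then have "i = length ws - 1" "ws \<noteq> []" using step.prems by auto
    then show ?thesis
      using step.hyps(3) by (auto simp: nth_append cur_def last_conv_nth)
  qed (use step in \<open>simp add: nth_append\<close>)
qed simp

lemma min_walk_prefix_degrees:
  "min_walk_prefix A s ws \<Longrightarrow>
    length (filter (\<lambda>x. tl x = v) ws) + of_bool (v = s)
    = length (filter (\<lambda>x. butlast x = v) ws) + of_bool (v = cur s ws)"
  by (induction rule: min_walk_prefix.induct) (auto simp: cur_def)

lemma min_walk_prefix_card_degrees: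
  assumes "min_walk_prefix A s ws"
  shows "card {x\<in>set ws. tl x = v} + of_bool (v = s)
    = card {x\<in>set ws. butlast x = v} + of_bool (v = cur s ws)"
proof -
  have "length (filter P ws) = card {x\<in>set ws. P x}" for P
    using distinct_length_filter[OF min_walk_prefix_distinct[OF assms]]
    by (simp add: Int_commute Collect_conj_eq)
  with min_walk_prefix_degrees[OF assms, of v] show ?thesis by simp
qed

lemma min_walk_prefix_nth_min_label:
  "min_walk_prefix A s ws \<Longrightarrow> j < length ws \<Longrightarrow> y \<in> A - set (take j ws) \<Longrightarrow>
    butlast y = butlast (ws ! j) \<Longrightarrow> last (ws ! j) \<le> last y"
proof (induction arbitrary: j rule: min_walk_prefix.induct)
  case (step ws x)
  then show ?case by (cases "j < length ws") (auto simp: nth_append)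
qed simp

lemma exists_unused_arc_if_card_less:
  assumes "card {x\<in>set ws. butlast x = v} < card {x\<in>A. butlast x = v}"
  shows "\<exists>y\<in>A - set ws. butlast y = v"
proof (rule ccontr)
  assume "\<not> ?thesis"
  then have "{x\<in>A. butlast x = v} \<subseteq> {x\<in>set ws. butlast x = v}" by blast
  then have "card {x\<in>A. butlast x = v} \<le> card {x\<in>set ws. butlast x = v}"
    by (intro card_mono) simp_all
  with assms show False by simp
qed

lemma minimal_walk_closed:
  assumes "finite A" "balanced A" "minimal_walk A s ws"
  shows "cur s ws = s"
proof (rule ccontr)
  let ?v = "cur s ws"
  assume "?v \<noteq> s"
  have walk: "min_walk_prefix A s ws" and stuck: "\<not> (\<exists>y\<in>A - set ws. butlast y = ?v)"
    using assms(3) by (auto simp: minimal_walk_def)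
  have "card {x\<in>set ws. butlast x = ?v} < card {x\<in>set ws. tl x = ?v}"
    using min_walk_prefix_card_degrees[OF walk, of ?v] \<open>?v \<noteq> s\<close> by simp
  also have "\<dots> \<le> card {x\<in>A. tl x = ?v}"
    using min_walk_prefix_subset[OF walk] assms(1) by (intro card_mono) auto
  also have "\<dots> = card {x\<in>A. butlast x = ?v}"
    using assms(2) by (simp add: balanced_def)
  finally show False using exists_unused_arc_if_card_less stuck by blast
qed

lemma unused_out_arc_at_head:
  assumes "finite A" "balanced A" "min_walk_prefix A s ws" "cur s ws = s" "y \<in> A - set ws"
  shows "\<exists>z\<in>A - set ws. butlast z = tl y"
proof -
  let ?w = "tl y"
  have "card {x\<in>set ws. butlast x = ?w} = card {x\<in>set ws. tl x = ?w}"
    using min_walk_prefix_card_degrees[OF assms(3), of ?w] assms(4) by simp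
  also have "\<dots> < card {x\<in>A. tl x = ?w}"
    using min_walk_prefix_subset[OF assms(3)] assms(1,5) by (intro psubset_card_mono) auto
  also have "\<dots> = card {x\<in>A. butlast x = ?w}"
    using assms(2) by (simp add: balanced_def)
  finally show ?thesis by (rule exists_unused_arc_if_card_less)
qed

lemma min_walk_prefix_max_label_arc_last:
  assumes walk: "min_walk_prefix A s ws" and "[] \<notin> A"
    and i: "i < length ws" "is_max_label_arc A (ws ! i)"
    and k: "k < length ws" "butlast (ws ! k) = butlast (ws ! i)"
  shows "k \<le> i"
proof (rule ccontr)
  assume "\<not> k \<le> i"
  have dist: "distinct ws" using walk by (rule min_walk_prefix_distinct)
  have "ws ! k \<notin> set (take i ws)"
    using dist k(1) \<open>\<not> k \<le> i\<close> by (auto simp: in_set_conv_nth nth_eq_iff_index_eq)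
  moreover have "ws ! k \<in> A" using min_walk_prefix_subset[OF walk] k(1) by auto
  ultimately have "last (ws ! i) \<le> last (ws ! k)"
    using min_walk_prefix_nth_min_label[OF walk i(1)] k(2) by blast
  then have "ws ! k = ws ! i"
    using max_label_arc_unique[OF assms(2) i(2) \<open>ws ! k \<in> A\<close> k(2)] by simp
  with dist i(1) k(1) \<open>\<not> k \<le> i\<close> show False by (simp add: nth_eq_iff_index_eq)
qed

lemma eulerian_cycle_closed:
  assumes "min_walk_prefix A s ws" "eulerian_cycle A ws"
  shows "cur s ws = s"
  using assms min_walk_prefix_hd[OF assms(1)] by (auto simp: cur_def eulerian_cycle_def)

lemma acyclic_max_label_rel_if_eulerian:
  assumes walk: "min_walk_prefix A s ws" and "[] \<notin> A" and euler: "eulerian_cycle A ws"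
  shows "acyclic (max_label_rel A s)"
proof -
  have arcs: "set ws = A" using euler by (simp add: eulerian_cycle_def)
  \<comment> \<open>Time of the last departure from v: T consists of last departures, so it increases along T.\<close>
  define exit where "exit v = (if v = s then length ws else Max {i. i < length ws \<and> butlast (ws ! i) = v})"
    for v
  have exit_le: "i \<le> exit v" if "i < length ws" "butlast (ws ! i) = v" for i v
    using that by (auto simp: exit_def intro: Max_ge)
  have exit_increases: "exit v < exit w" if vw: "(v, w) \<in> max_label_rel A s" for v w
  proof -
    obtain x where x: "is_max_label_arc A x" "butlast x \<noteq> s" "v = butlast x" "w = tl x"
      using vw by (auto simp: max_label_rel_def)
    then obtain i where i: "i < length ws" "ws ! i = x"
      using arcs by (metis in_set_conv_nth is_max_label_arc_def)
    have "exit v = i"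
      unfolding exit_def using x(2,3)
      by (auto intro!: Max_eqI min_walk_prefix_max_label_arc_last[OF walk assms(2) i(1)] simp: i x(1))
    show ?thesis
    proof (cases "w = s")
      case True
      then have "exit w = length ws" by (simp add: exit_def)
      with i(1) \<open>exit v = i\<close> show ?thesis by simp
    next
      case False
      have next_arc: "Suc i < length ws"
      proof (rule ccontr)
        assume "\<not> Suc i < length ws"
        then have "i = length ws - 1" "ws \<noteq> []" using i(1) by auto
        then have "last ws = x" using i(2) by (simp add: last_conv_nth)
        then show False
          using eulerian_cycle_closed[OF walk euler] x(4) False \<open>ws \<noteq> []\<close> by (simp add: cur_def)
      qed
      moreover have "butlast (ws ! Suc i) = w"
        using min_walk_prefix_chain[OF walk next_arc] i(2) x(4) by simp
      ultimately show ?thesis using exit_le \<open>exit v = i\<close> by fastforce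
    qed
  qed
  then have "max_label_rel A s \<subseteq> inv_image less_than exit" by auto
  then show ?thesis by (rule acyclic_subset[OF wf_acyclic[OF wf_inv_image[OF wf_less_than]]])
qed

lemma minimal_walk_uses_all_arcs_if_acyclic:
  assumes fin: "finite A" and "[] \<notin> A" and bal: "balanced A" and mw: "minimal_walk A s ws"
    and acyc: "acyclic (max_label_rel A s)"
  shows "set ws = A"
proof (rule ccontr)
  assume "set ws \<noteq> A"
  have walk: "min_walk_prefix A s ws" and stuck: "\<not> (\<exists>y\<in>A - set ws. butlast y = cur s ws)"
    using mw by (auto simp: minimal_walk_def)
  have closed: "cur s ws = s" using fin bal mw by (rule minimal_walk_closed)
  \<comment> \<open>Every tail of an unused arc leads, along T, to another such tail.\<close>
  define U where "U = butlast ` (A - set ws)"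
  have "U \<noteq> {}" using \<open>set ws \<noteq> A\<close> min_walk_prefix_subset[OF walk] by (auto simp: U_def)
  moreover have "finite U" using fin by (simp add: U_def)
  ultimately obtain v where v: "v \<in> U" and sink: "\<And>w. w \<in> U \<Longrightarrow> (v, w) \<notin> max_label_rel A s"
    using acyclic_finite_has_sink[OF acyc] by metis
  obtain y where y: "y \<in> A - set ws" "butlast y = v" using v by (auto simp: U_def)
  obtain x where x: "is_max_label_arc A x" "butlast x = v"
    using exists_max_label_arc[OF fin, of y] y by auto
  have "v \<noteq> s" using stuck closed y by auto
  then have vx: "(v, tl x) \<in> max_label_rel A s" using x by (auto simp: max_label_rel_def)
  have "x \<notin> set ws"
  proof
    assume "x \<in> set ws"
    then obtain j where j: "j < length ws" "ws ! j = x" by (auto simp: in_set_conv_nth)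
    then have "last x \<le> last y"
      using min_walk_prefix_nth_min_label[OF walk j(1), of y] y x(2) set_take_subset by fastforce
    then have "y = x" using max_label_arc_unique[OF assms(2) x(1)] y x(2) by simp
    with y \<open>x \<in> set ws\<close> show False by simp
  qed
  then have "x \<in> A - set ws" using x(1) by (simp add: is_max_label_arc_def)
  then obtain z where "z \<in> A - set ws" "butlast z = tl x"
    using unused_out_arc_at_head[OF fin bal walk closed] by blast
  then have "tl x \<in> U" by (force simp: U_def)
  with sink vx show False by blast
qed

theorem minimal_walk_eulerian_iff_acyclic:
  assumes "finite A" and "[] \<notin> A" and "balanced A" and mw: "minimal_walk A s ws"
  shows "eulerian_cycle A ws \<longleftrightarrow> acyclic (max_label_rel A s)"
proof
  have walk: "min_walk_prefix A s ws" using mw by (simp add: minimal_walk_def)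
  show "eulerian_cycle A ws \<Longrightarrow> acyclic (max_label_rel A s)"
    using walk assms(2) by (rule acyclic_max_label_rel_if_eulerian)
  assume "acyclic (max_label_rel A s)"
  with assms have "set ws = A" by (rule minimal_walk_uses_all_arcs_if_acyclic)
  moreover have "cur s ws = s" using assms(1,3) mw by (rule minimal_walk_closed)
  ultimately show "eulerian_cycle A ws"
    using min_walk_prefix_distinct[OF walk] min_walk_prefix_chain[OF walk] min_walk_prefix_hd[OF walk]
    by (auto simp: eulerian_cycle_def cur_def split: if_splits)
qed

theorem theorem2:
  fixes F :: "('a::{finite,linorder}) list set" and n :: nat
    and C :: "'a list set" and m :: "'a list" and ws :: "'a list list"
  assumes "n \<ge> 1"
    and "is_max_scc F n C"
    and "is_lex_max C m"
    and "minimal_walk (G_arcs F n C) m ws"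
  shows "eulerian_cycle (G_arcs F n C) ws \<longleftrightarrow> acyclic (T_rel F n C m)"
proof -
  have "is_scc F n C" using assms(2) by (simp add: is_max_scc_def)
  then have "balanced (G_arcs F n C)" by (rule balanced_G_arcs)
  then have "eulerian_cycle (G_arcs F n C) ws \<longleftrightarrow> acyclic (max_label_rel (G_arcs F n C) m)"
    using finite_G_arcs Nil_notin_G_arcs assms(4) by (intro minimal_walk_eulerian_iff_acyclic)
  then show ?thesis by (simp add: T_rel_eq_max_label_rel)
qed

end
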